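(* Let $f\in C_p(\mathbb{R})$ with $f(z)\ge0$ for all $z\in[0,1]$. Then $$H_tf(x)=\min_{z\in[0,1]}q_f(t,x;z)\quad\text{for all }(t,x)\in(0,\infty)\times[0,1].$$
   Context: $C_p(\mathbb{R})$ denotes the set of all continuous functions $f:\mathbb{R}\to\mathbb{R}$ periodic with period $1$ with $f(0)=0$. For such $f$, $q_f(t,x;z)=f(z)+\frac{1}{2t}(x-z)^2$ for $(t,x,z)\in(0,\infty)\times\mathbb{R}\times\mathbb{R}$, and $H_tf(x)=\inf_{z\in\mathbb{R}}q_f(t,x;z)$. *)

theory Defs
  imports "HOL-Analysis.Analysis"
begin

definition Cp :: "(real \<Rightarrow> real) set" where
  "Cp = {f. continuous_on UNIV f \<and> (\<forall>x. f (x + 1) = f x) \<and> f 0 = 0}"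

definition qf :: "(real \<Rightarrow> real) \<Rightarrow> real \<Rightarrow> real \<Rightarrow> real \<Rightarrow> real" where
  "qf f t x z = f z + (x - z)^2 / (2 * t)"

definition Ht :: "real \<Rightarrow> (real \<Rightarrow> real) \<Rightarrow> real \<Rightarrow> real" where
  "Ht t f x = (INF z\<in>(UNIV::real set). qf f t x z)"

end

theory Submission
  imports Defs
begin

text \<open>By periodicity \<open>f \<ge> 0\<close> everywhere, and \<open>f\<close> vanishes at \<open>0\<close> and \<open>1\<close>. Hence for
  \<open>x \<in> [0,1]\<close> a point \<open>z < 0\<close> is beaten by \<open>0\<close> and a point \<open>z > 1\<close> by \<open>1\<close>: these are
  closer to \<open>x\<close> and carry no larger value of \<open>f\<close>. So the infimum over \<open>\<real>\<close> is the
  minimum over the compact interval \<open>[0,1]\<close>, which is attained by continuity.\<close>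

lemma periodic_shift_of_int:
  fixes f :: "real \<Rightarrow> 'a"
  assumes "\<And>x. f (x + 1) = f x"
  shows "f (x + of_int k) = f x"
proof (induction k rule: int_induct[where k = 0])
  case (step1 i)
  then show ?case using assms[of "x + of_int i"] by (simp add: add.assoc)
next
  case (step2 i)
  then show ?case using assms[of "x + of_int (i - 1)"] by (simp add: add.assoc)
qed simp

lemma periodic_frac_eq:
  fixes f :: "real \<Rightarrow> 'a"
  assumes "\<And>x. f (x + 1) = f x"
  shows "f (frac x) = f x"
  using periodic_shift_of_int[where f = f, OF assms, of "frac x" "\<lfloor>x\<rfloor>"] by (simp add: frac_def)

lemma periodic_nonneg_if_nonneg_on_unit_interval:
  fixes f :: "real \<Rightarrow> real"
  assumes "\<And>x. f (x + 1) = f x" and "\<forall>z\<in>{0..1}. f z \<ge> 0"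
  shows "f x \<ge> 0"
proof -
  have "frac x \<in> {0..1}"
    using frac_ge_0 frac_lt_1 less_imp_le by auto
  then show ?thesis
    using assms(2) periodic_frac_eq[where f = f, OF assms(1)] by metis
qed

lemma qf_le_at_closer_root:
  assumes "t > 0" "f a = 0" "f w \<ge> 0" "\<bar>x - a\<bar> \<le> \<bar>x - w\<bar>"
  shows "qf f t x a \<le> qf f t x w"
proof -
  have "(x - a)\<^sup>2 / (2 * t) \<le> (x - w)\<^sup>2 / (2 * t)"
    using assms(1,4) by (intro divide_right_mono) (auto simp: abs_le_square_iff)
  then show ?thesis
    using assms(2,3) by (simp add: qf_def)
qed

lemma Ht_eq_global_min:
  assumes "\<And>w. qf f t x z \<le> qf f t x w"
  shows "Ht t f x = qf f t x z"
  unfolding Ht_def by (rule cInf_eq_minimum) (use assms in auto)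

lemma Ht_attained_in_interval:
  assumes "continuous_on {a..b} f" "f a = 0" "f b = 0" "\<And>w. f w \<ge> 0"
    and "t > 0" "x \<in> {a..b}"
  shows "\<exists>z\<in>{a..b}. (\<forall>w\<in>{a..b}. qf f t x z \<le> qf f t x w) \<and> Ht t f x = qf f t x z"
proof -
  have "continuous_on {a..b} (qf f t x)"
    unfolding qf_def by (intro continuous_intros assms(1)) (use assms(5) in auto)
  then obtain z where z: "z \<in> {a..b}" and min: "\<forall>w\<in>{a..b}. qf f t x z \<le> qf f t x w"
    using continuous_attains_inf[of "{a..b}" "qf f t x"] assms(6) by auto
  have "qf f t x z \<le> qf f t x w" for w
  proof -
    consider "w < a" | "w \<in> {a..b}" | "w > b" by fastforce
    then show ?thesis
    proof cases
      case 1
      then have "qf f t x a \<le> qf f t x w"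
        using assms by (intro qf_le_at_closer_root) auto
      moreover have "qf f t x z \<le> qf f t x a"
        using min assms(6) by auto
      ultimately show ?thesis by linarith
    next
      case 3
      then have "qf f t x b \<le> qf f t x w"
        using assms by (intro qf_le_at_closer_root) auto
      moreover have "qf f t x z \<le> qf f t x b"
        using min assms(6) by auto
      ultimately show ?thesis by linarith
    qed (use min in auto)
  qed
  then show ?thesis
    using z min Ht_eq_global_min by blast
qed

theorem lemma4p1:
  fixes f :: "real \<Rightarrow> real"
  assumes "f \<in> Cp"
    and "\<forall>z\<in>{0..1}. f z \<ge> 0"
  shows "\<forall>t x. t > 0 \<and> x \<in> {0..1} \<longrightarrow>
           (\<exists>z\<in>{0..1}. (\<forall>w\<in>{0..1}. qf f t x z \<le> qf f t x w)
                        \<and> Ht t f x = qf f t x z)"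
proof (intro allI impI)
  fix t x :: real
  assume tx: "t > 0 \<and> x \<in> {0..1}"
  have cont: "continuous_on {0..1} f" and per: "\<And>x. f (x + 1) = f x" and f0: "f 0 = 0"
    using assms(1) continuous_on_subset by (auto simp: Cp_def)
  have f1: "f 1 = 0"
    using per[of 0] f0 by simp
  have "f w \<ge> 0" for w
    using periodic_nonneg_if_nonneg_on_unit_interval[OF per assms(2)] .
  then show "\<exists>z\<in>{0..1}. (\<forall>w\<in>{0..1}. qf f t x z \<le> qf f t x w) \<and> Ht t f x = qf f t x z"
    using Ht_attained_in_interval[OF cont f0 f1] tx by blast
qed

end
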